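(* Let $S,T$ be valid configurations and $M:S\to T$ a bijection. Let $i,j\in\{1,2\}$ and let $A\neq B$ and $C\neq D$ be pairs of $M$ with $(i,A,B)\neq(j,C,D)$. If the boundaries $\partial\mathcal V^{(i)}_{AB}$ and $\partial\mathcal V^{(j)}_{CD}$ intersect in finitely many points (i.e., they do not partially overlap), then they intersect in at most four points.
   Context: For $p\in\mathbb R^2$, $D(p)$ is the open unit disc centered at $p$; a configuration is a finite set of points in $\mathbb R^2$, valid if any two distinct points of it are at distance at least $2$. A pair of $M$ is $A=(A^S,A^T)$ with $A^T=M(A^S)$. For $\vec v\in\mathbb R^2$, $H_{\vec v}(A)$ is the convex hull of $D(A^S)\cup D(A^T+\vec v)$. The vippodromes are $\mathcal V^{(1)}_{AB}=\{\vec v: D(A^S)\cap H_{\vec v}(B)\neq\emptyset\}$ and $\mathcal V^{(2)}_{AB}=\{\vec v: D(B^T+\vec v)\cap H_{\vec v}(A)\neq\emptyset\}$. (Each vippodrome boundary is a smooth concatenation of two rays and a circular arc of radius $2$.) *)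

theory Defs
  imports "HOL-Analysis.Analysis"
begin

type_synonym pt = "real^2"

definition disc :: "pt \<Rightarrow> pt set" where
  "disc p = ball p 1"

definition valid_config :: "pt set \<Rightarrow> bool" where
  "valid_config S \<longleftrightarrow> finite S \<and> (\<forall>x\<in>S. \<forall>y\<in>S. x \<noteq> y \<longrightarrow> dist x y \<ge> 2)"

text \<open>Pairs of M: A = (A^S, A^T) with A^S in S and A^T = M A^S.\<close>
definition pairs_of :: "(pt \<Rightarrow> pt) \<Rightarrow> pt set \<Rightarrow> (pt \<times> pt) set" where
  "pairs_of M S = {(s, M s) | s. s \<in> S}"

definition hull_pair :: "pt \<Rightarrow> pt \<times> pt \<Rightarrow> pt set" where
  "hull_pair v A = convex hull (disc (fst A) \<union> disc (snd A + v))"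

definition vipp1 :: "pt \<times> pt \<Rightarrow> pt \<times> pt \<Rightarrow> pt set" where
  "vipp1 A B = {v. disc (fst A) \<inter> hull_pair v B \<noteq> {}}"

definition vipp2 :: "pt \<times> pt \<Rightarrow> pt \<times> pt \<Rightarrow> pt set" where
  "vipp2 A B = {v. disc (snd B + v) \<inter> hull_pair v A \<noteq> {}}"

definition vippodrome :: "nat \<Rightarrow> pt \<times> pt \<Rightarrow> pt \<times> pt \<Rightarrow> pt set" where
  "vippodrome i A B = (if i = 1 then vipp1 A B else vipp2 A B)"

end

theory Submission
  imports Defs
begin

text \<open>Each vippodrome is a region tangent_region q c: the intersection of the open
  half-planes inner (w - c) m < 2 over the arc of unit normals m with inner q m \<ge> 2, i.e. the
  region bounded by an arc of the circle of radius 2 about c and its two tangent rays. At a common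
  boundary point z pick outer normals n1 and n2 of the two regions. A continuous, positively
  homogeneous function sign_fun on directions is \<ge> 0 at n1 and \<le> 0 at n2, so it vanishes at a
  direction between them. Comparing the support inequalities at two common points shows that,
  unless the boundaries share a segment, distinct common points give distinct such directions.
  Finally sign_fun vanishes in at most four directions: the two ends of the second arc and at most
  two directions singled out by the first arc and the offset of the centres. The degenerate cases
  (an arc reduced to a point, or opposite normals at a common point) leave at most two common
  points.\<close>

section \<open>Orthonormal frames in the plane\<close>

lemma inner_vec2: "inner (x::real^2) y = x$1 * y$1 + x$2 * y$2"
  by (simp add: inner_vec_def sum_2)

lemma norm_vec2_squared: "(norm (x::real^2))\<^sup>2 = (x$1)\<^sup>2 + (x$2)\<^sup>2"
  by (simp add: norm_vec_def L2_set_def sum_2)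

lemma vec2_eq_iff: "(x::real^2) = y \<longleftrightarrow> x$1 = y$1 \<and> x$2 = y$2"
  by (metis (mono_tags) exhaust_2 vec_eq_iff)

definition rot90 :: "real^2 \<Rightarrow> real^2" where
  "rot90 x = vector [- x$2, x$1]"

lemma rot90_nth [simp]: "rot90 x $ 1 = - x$2" "rot90 x $ 2 = x$1"
  by (simp_all add: rot90_def)

lemma rot90_rot90 [simp]: "rot90 (rot90 x) = - x"
  by (simp add: vec2_eq_iff)

lemma inner_rot90_rot90 [simp]: "inner (rot90 x) (rot90 y) = inner x y"
  and inner_rot90_self [simp]: "inner x (rot90 x) = 0" "inner (rot90 x) x = 0"
  by (simp_all add: inner_vec2 algebra_simps)

lemma norm_rot90 [simp]: "norm (rot90 x) = norm x"
  by (metis inner_rot90_rot90 norm_eq_sqrt_inner)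

lemma orthonormal_expansion:
  assumes "norm m = 1"
  shows "x = inner x m *\<^sub>R m + inner x (rot90 m) *\<^sub>R rot90 m"
proof -
  have "(m$1)\<^sup>2 + (m$2)\<^sup>2 = 1" using assms norm_vec2_squared[of m] by simp
  then show ?thesis
    unfolding vec2_eq_iff inner_vec2 by (simp add: power2_eq_square algebra_simps) algebra
qed

lemma norm_squared_expansion:
  assumes "norm m = 1"
  shows "(norm x)\<^sup>2 = (inner x m)\<^sup>2 + (inner x (rot90 m))\<^sup>2"
proof -
  have "(m$1)\<^sup>2 + (m$2)\<^sup>2 = 1" using assms norm_vec2_squared[of m] by simp
  then show ?thesis
    unfolding norm_vec2_squared inner_vec2 by (simp add: power2_eq_square algebra_simps) algebra
qed

lemma orthogonal_unit_expansion:
  assumes "norm u = 1" "inner x u = 0"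
  shows "x = inner x (rot90 u) *\<^sub>R rot90 u"
  using orthonormal_expansion[OF assms(1), of x] assms(2) by simp

lemma unit_scaleR_cases:
  fixes a b :: "'a::real_normed_vector"
  assumes "norm a = 1" "norm b = 1" "b = c *\<^sub>R a"
  shows "b = a \<or> b = - a"
proof -
  have "\<bar>c\<bar> = 1" using assms by simp
  then show ?thesis using assms(3) by (auto simp: abs_if split: if_splits)
qed

lemma unit_orthogonal_cases:
  fixes a b v :: "real^2"
  assumes "norm a = 1" "norm b = 1" "v \<noteq> 0" "inner v a = 0" "inner v b = 0"
  shows "b = a \<or> b = - a"
proof -
  define u where "u = (1 / norm v) *\<^sub>R v"
  have u: "norm u = 1" using assms(3) by (simp add: u_def)
  have "inner a u = 0" "inner b u = 0" using assms(4,5) by (simp_all add: u_def inner_commute)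
  then have a: "a = inner a (rot90 u) *\<^sub>R rot90 u" and b: "b = inner b (rot90 u) *\<^sub>R rot90 u"
    using orthogonal_unit_expansion[OF u] by blast+
  have "inner a (rot90 u) \<noteq> 0" using a assms(1) by auto
  then have "b = (inner b (rot90 u) / inner a (rot90 u)) *\<^sub>R a"
    by (subst a, subst b) simp
  then show ?thesis using unit_scaleR_cases assms(1,2) by blast
qed

lemma inner_rot90_unit_neq_0:
  assumes "norm a = 1" "norm b = 1" "b \<noteq> a" "b \<noteq> - a"
  shows "inner (rot90 a) b \<noteq> 0"
proof
  assume "inner (rot90 a) b = 0"
  moreover have "rot90 a \<noteq> 0" using assms(1) norm_rot90[of a] by (metis norm_zero zero_neq_one)
  ultimately show False
    using unit_orthogonal_cases[OF assms(1,2), of "rot90 a"] assms(3,4) by simp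
qed

lemma unit_independent:
  fixes a b :: "real^2"
  assumes "norm a = 1" "norm b = 1" "b \<noteq> a" "b \<noteq> - a" "x *\<^sub>R a + y *\<^sub>R b = 0"
  shows "x = 0 \<and> y = 0"
proof -
  have "y * inner (rot90 a) b = inner (rot90 a) (x *\<^sub>R a + y *\<^sub>R b)"
    by (simp add: inner_add_right)
  then have "y = 0" using assms(5) inner_rot90_unit_neq_0[OF assms(1-4)] by simp
  then show ?thesis using assms(1,5) by auto
qed

lemma finite_unit_circle_Int_line:
  fixes a :: "real^2"
  assumes "a \<noteq> 0"
  shows "finite {d. norm d = 1 \<and> inner a d = b}" "card {d. norm d = 1 \<and> inner a d = b} \<le> 2"
proof -
  let ?E = "{d. norm d = 1 \<and> inner a d = b}"
  have "\<exists>d1 d2. ?E \<subseteq> {d1, d2}"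
  proof (cases "?E = {}")
    case False
    then obtain d1 where d1: "norm d1 = 1" "inner a d1 = b" by auto
    define r where "r = rot90 ((1 / norm a) *\<^sub>R a)"
    have r: "norm r = 1" using assms by (simp add: r_def)
    have "d \<in> {d1, d1 - (2 * inner d1 r) *\<^sub>R r}" if d: "d \<in> ?E" for d
    proof -
      define l where "l = inner (d - d1) r"
      have "inner (d - d1) (rot90 r) = 0"
        using d d1 by (simp add: r_def inner_diff_left inner_diff_right inner_commute)
      then have deq: "d = d1 + l *\<^sub>R r"
        using orthonormal_expansion[OF r, of "d - d1"] by (simp add: l_def algebra_simps)
      have "1 = inner d d" using d by (simp flip: power2_norm_eq_inner)
      also have "\<dots> = inner d1 d1 + 2 * l * inner d1 r + l\<^sup>2 * inner r r"
        by (simp add: deq inner_commute power2_eq_square algebra_simps)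
      also have "\<dots> = 1 + 2 * l * inner d1 r + l\<^sup>2"
        using d1 r by (simp flip: power2_norm_eq_inner)
      finally have "l * (l + 2 * inner d1 r) = 0" by (simp add: power2_eq_square algebra_simps)
      then have "l = 0 \<or> l = - (2 * inner d1 r)" by auto
      then show ?thesis using deq by auto
    qed
    then show ?thesis by blast
  qed auto
  then obtain d1 d2 where sub: "?E \<subseteq> {d1, d2}" by blast
  show "finite ?E" using sub finite_subset by blast
  show "card ?E \<le> 2" using card_mono[OF _ sub] card_insert_le_m1[of 2 "{d2}" d1] by force
qed

section \<open>Regions bounded by an arc and its tangent rays\<close>

definition normal_arc :: "real^2 \<Rightarrow> (real^2) set" where
  "normal_arc q = {m. norm m = 1 \<and> 2 \<le> inner q m}"

text \<open>For norm q \<ge> 2, tangent_region q c is bounded by the arc c + 2 m, m \<in> normal_arc q, and the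
  tangent rays at its ends; it consists of the points w such that the segment from c + q to w meets
  the open disc of radius 2 about c (tangent_region_eq_segments).\<close>
definition tangent_region :: "real^2 \<Rightarrow> real^2 \<Rightarrow> (real^2) set" where
  "tangent_region q c = {w. \<forall>m\<in>normal_arc q. inner (w - c) m < 2}"

definition closed_tangent_region :: "real^2 \<Rightarrow> real^2 \<Rightarrow> (real^2) set" where
  "closed_tangent_region q c = {w. \<forall>m\<in>normal_arc q. inner (w - c) m \<le> 2}"

definition active_normals :: "real^2 \<Rightarrow> real^2 \<Rightarrow> real^2 \<Rightarrow> (real^2) set" where
  "active_normals q c w = {m \<in> normal_arc q. inner (w - c) m = 2}"

definition tangent_boundary :: "real^2 \<Rightarrow> real^2 \<Rightarrow> (real^2) set" where
  "tangent_boundary q c = {w \<in> closed_tangent_region q c. active_normals q c w \<noteq> {}}"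

lemma inner_diff_as_affine: "inner (w - c) m = inner m w - inner m c"
  by (metis inner_commute inner_diff_right)

lemma closed_tangent_region_eq_INT:
  "closed_tangent_region q c = (\<Inter>m\<in>normal_arc q. {w. inner m w \<le> 2 + inner m c})"
  by (fastforce simp: closed_tangent_region_def inner_diff_as_affine diff_le_eq add.commute)

lemma convex_closed_tangent_region: "convex (closed_tangent_region q c)"
  unfolding closed_tangent_region_eq_INT by (intro convex_INT ballI convex_halfspace_le)

lemma closed_closed_tangent_region: "closed (closed_tangent_region q c)"
  unfolding closed_tangent_region_eq_INT by (intro closed_INT ballI closed_halfspace_le)

lemma active_normal_supports:
  assumes "w \<in> closed_tangent_region q c" "m \<in> active_normals q c z"
  shows "inner (z - w) m \<ge> 0"
  using assms by (auto simp: closed_tangent_region_def active_normals_def inner_diff_left)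

lemma closed_segment_subset_tangent_boundary:
  assumes "a \<in> closed_tangent_region q c" "b \<in> closed_tangent_region q c"
    and "m \<in> active_normals q c a" "m \<in> active_normals q c b"
  shows "closed_segment a b \<subseteq> tangent_boundary q c"
proof
  fix w assume w: "w \<in> closed_segment a b"
  have "closed_segment a b \<subseteq> closed_tangent_region q c"
    using assms(1,2) convex_closed_tangent_region by (rule closed_segment_subset)
  moreover have "closed_segment a b \<subseteq> {w. inner m w = 2 + inner m c}"
    using assms(3,4)
    by (intro closed_segment_subset convex_hyperplane)
       (auto simp: active_normals_def inner_diff_as_affine)
  ultimately have "w \<in> closed_tangent_region q c" "m \<in> active_normals q c w"
    using w assms(3) by (auto simp: active_normals_def inner_diff_as_affine)
  then show "w \<in> tangent_boundary q c" by (auto simp: tangent_boundary_def)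
qed

lemma active_normal_open_segment:
  assumes "a \<in> open_segment b d" "m \<in> active_normals q c a"
    and "b \<in> closed_tangent_region q c" "d \<in> closed_tangent_region q c"
  shows "m \<in> active_normals q c b \<and> m \<in> active_normals q c d"
proof -
  obtain u where u: "0 < u" "u < 1" "a = (1 - u) *\<^sub>R b + u *\<^sub>R d"
    using assms(1) by (auto simp: in_segment)
  have "inner (a - c) m = (1 - u) * inner (b - c) m + u * inner (d - c) m"
    unfolding u(3) by (simp add: algebra_simps)
  then have "(1 - u) * (2 - inner (b - c) m) + u * (2 - inner (d - c) m) = 0"
    using assms(2) by (simp add: active_normals_def algebra_simps)
  moreover have "inner (b - c) m \<le> 2" "inner (d - c) m \<le> 2"
    using assms by (auto simp: closed_tangent_region_def active_normals_def)
  moreover have "(1 - u) * (2 - inner (b - c) m) \<ge> 0" "u * (2 - inner (d - c) m) \<ge> 0"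
    using calculation(2,3) u(1,2) by simp_all
  ultimately have "(1 - u) * (2 - inner (b - c) m) = 0" "u * (2 - inner (d - c) m) = 0"
    by linarith+
  then have "inner (b - c) m = 2 \<and> inner (d - c) m = 2"
    using u(1,2) by simp
  then show ?thesis using assms(2) by (simp add: active_normals_def)
qed

lemma normal_arc_eq_singleton:
  assumes "norm q = 2"
  shows "normal_arc q = {(1/2) *\<^sub>R q}"
proof
  show "normal_arc q \<subseteq> {(1/2) *\<^sub>R q}"
  proof
    fix m assume "m \<in> normal_arc q"
    then have m: "norm m = 1" "2 \<le> inner q m" by (auto simp: normal_arc_def)
    then have "inner q m = norm q * norm m" using norm_cauchy_schwarz[of q m] assms by simp
    then have "norm q *\<^sub>R m = norm m *\<^sub>R q" by (simp add: norm_cauchy_schwarz_eq)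
    then have "(1/2) *\<^sub>R q = (1/2) *\<^sub>R (2 *\<^sub>R m)" using m(1) assms by simp
    then show "m \<in> {(1/2) *\<^sub>R q}" by simp
  qed
  show "{(1/2) *\<^sub>R q} \<subseteq> normal_arc q"
    using assms by (simp add: normal_arc_def power2_eq_square flip: power2_norm_eq_inner)
qed

lemma normal_arc_not_antipodal:
  assumes "m \<in> normal_arc q" "n \<in> normal_arc q"
  shows "n \<noteq> - m"
  using assms by (auto simp: normal_arc_def)

lemma segments_meeting_ball_subset_tangent_region:
  fixes p c :: "real^2"
  assumes pc: "norm (p - c) \<ge> 2"
  shows "{w. \<exists>z\<in>closed_segment p w. dist c z < 2} \<subseteq> tangent_region (p - c) c"
proof clarify
  fix w z assume z: "z \<in> closed_segment p w" "dist c z < 2"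
  obtain t where t: "0 \<le> t" "t \<le> 1" "z = (1 - t) *\<^sub>R p + t *\<^sub>R w"
    using z(1) by (auto simp: closed_segment_def)
  have "t \<noteq> 0" using t(3) z(2) pc by (auto simp: dist_norm norm_minus_commute)
  show "w \<in> tangent_region (p - c) c" unfolding tangent_region_def
  proof (intro CollectI ballI)
    fix m assume "m \<in> normal_arc (p - c)"
    then have m: "norm m = 1" "inner (p - c) m \<ge> 2" by (auto simp: normal_arc_def)
    have "inner (z - c) m < 2"
      using norm_cauchy_schwarz[of "z - c" m] z(2) m(1) by (simp add: dist_norm norm_minus_commute)
    moreover have "z - c = (1 - t) *\<^sub>R (p - c) + t *\<^sub>R (w - c)"
      using t(3) by (simp add: algebra_simps)
    ultimately have "t * inner (w - c) m < 2 - (1 - t) * inner (p - c) m"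
      by (simp add: inner_add_left)
    also have "\<dots> \<le> t * 2" using mult_left_mono[OF m(2), of "1 - t"] t(2) by simp
    finally show "inner (w - c) m < 2" using t(1) \<open>t \<noteq> 0\<close> by simp
  qed
qed

lemma tangent_region_subset_segments_meeting_ball:
  fixes p c :: "real^2"
  shows "tangent_region (p - c) c \<subseteq> {w. \<exists>z\<in>closed_segment p w. dist c z < 2}"
proof (rule subsetI, rule ccontr)
  fix w assume w: "w \<in> tangent_region (p - c) c" "w \<notin> {w. \<exists>z\<in>closed_segment p w. dist c z < 2}"
  obtain z0 where z0: "z0 \<in> closed_segment p w" "\<And>y. y \<in> closed_segment p w \<Longrightarrow> dist c z0 \<le> dist c y"
    using distance_attains_inf[of "closed_segment p w" c] by auto
  have r: "norm (z0 - c) \<ge> 2" using w(2) z0(1) by (auto simp: dist_norm norm_minus_commute)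
  define m where "m = (1 / norm (z0 - c)) *\<^sub>R (z0 - c)"
  \<comment> \<open>The nearest point z0 of the segment to c: the segment lies beyond the tangent line at z0.\<close>
  have far: "inner (y - c) m \<ge> 2" if y: "y \<in> closed_segment p w" for y
  proof -
    have "inner (c - z0) (y - z0) \<le> 0"
      using any_closest_point_dot[of "closed_segment p w" z0 y c] z0 y by auto
    then have "inner (y - c) (z0 - c) \<ge> inner (z0 - c) (z0 - c)"
      by (simp add: inner_commute inner_diff_left inner_diff_right)
    moreover have "inner (y - c) m = inner (y - c) (z0 - c) / norm (z0 - c)"
      by (simp add: m_def)
    moreover have "0 < norm (z0 - c)" using r by linarith
    ultimately have "inner (y - c) m \<ge> norm (z0 - c)"
      by (simp add: pos_le_divide_eq power2_eq_square flip: power2_norm_eq_inner)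
    then show ?thesis using r by linarith
  qed
  have "z0 \<noteq> c" using r by auto
  then have "norm m = 1" by (simp add: m_def)
  then have "m \<in> normal_arc (p - c)" using far[of p] by (simp add: normal_arc_def)
  then show False using w(1) far[of w] by (auto simp: tangent_region_def)
qed

lemma tangent_region_eq_segments:
  fixes p c :: "real^2"
  assumes "norm (p - c) \<ge> 2"
  shows "tangent_region (p - c) c = {w. \<exists>z\<in>closed_segment p w. dist c z < 2}"
  using segments_meeting_ball_subset_tangent_region[OF assms] tangent_region_subset_segments_meeting_ball
  by (rule equalityI[rotated])

lemma open_segments_meeting_ball:
  fixes p c :: "'a::real_normed_vector"
  shows "open {w. \<exists>z\<in>closed_segment p w. dist c z < r}"
  unfolding open_dist
proof clarify
  fix w z assume z: "z \<in> closed_segment p w" "dist c z < r"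
  obtain t where t: "0 \<le> t" "t \<le> 1" "z = (1 - t) *\<^sub>R p + t *\<^sub>R w"
    using z(1) by (auto simp: closed_segment_def)
  have "y \<in> {w. \<exists>z\<in>closed_segment p w. dist c z < r}" if y: "dist y w < r - dist c z" for y
  proof -
    define z' where "z' = (1 - t) *\<^sub>R p + t *\<^sub>R y"
    have "z' \<in> closed_segment p y" using t by (auto simp: z'_def closed_segment_def)
    moreover have "z' - z = t *\<^sub>R (y - w)" by (simp add: z'_def t(3) algebra_simps)
    then have "dist z' z = t * dist y w" using t(1) by (metis dist_norm norm_scaleR abs_of_nonneg)
    then have "dist z' z \<le> dist y w" using t(1,2) by (simp add: mult_left_le_one_le)
    then have "dist c z' < r" using y dist_triangle[of c z' z] dist_commute[of z' z] by linarith
    ultimately show ?thesis by blast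
  qed
  moreover have "r - dist c z > 0" using z(2) by simp
  ultimately show "\<exists>e>0. \<forall>y. dist y w < e \<longrightarrow> y \<in> {w. \<exists>z\<in>closed_segment p w. dist c z < r}"
    by blast
qed

lemma open_tangent_region:
  assumes "norm q \<ge> 2"
  shows "open (tangent_region q c)"
  using tangent_region_eq_segments[of "c + q" c] open_segments_meeting_ball assms by simp

lemma open_segment_subset_tangent_region:
  assumes "w \<in> closed_tangent_region q c"
  shows "open_segment c w \<subseteq> tangent_region q c"
proof
  fix y assume "y \<in> open_segment c w"
  then obtain u where u: "0 < u" "u < 1" "y = (1 - u) *\<^sub>R c + u *\<^sub>R w"
    by (auto simp: in_segment)
  have yc: "y - c = u *\<^sub>R (w - c)" using u(3) by (simp add: algebra_simps)
  show "y \<in> tangent_region q c" unfolding tangent_region_def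
  proof (intro CollectI ballI)
    fix n assume n: "n \<in> normal_arc q"
    have "inner (y - c) n = u * inner (w - c) n" using yc by simp
    also have "\<dots> \<le> u * 2"
      using assms n u(1) by (intro mult_left_mono) (auto simp: closed_tangent_region_def)
    also have "\<dots> < 2" using u(2) by simp
    finally show "inner (y - c) n < 2" .
  qed
qed

lemma frontier_tangent_region:
  assumes "norm q \<ge> 2"
  shows "frontier (tangent_region q c) = tangent_boundary q c"
proof
  have "tangent_region q c \<subseteq> closed_tangent_region q c"
    by (auto simp: tangent_region_def closed_tangent_region_def less_imp_le)
  then have cl: "closure (tangent_region q c) \<subseteq> closed_tangent_region q c"
    using closed_closed_tangent_region closure_minimal by blast
  show "frontier (tangent_region q c) \<subseteq> tangent_boundary q c"
  proof
    fix w assume "w \<in> frontier (tangent_region q c)"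
    then have "w \<in> closed_tangent_region q c" "w \<notin> tangent_region q c"
      using cl open_tangent_region[OF assms] by (auto simp: frontier_def interior_open)
    then show "w \<in> tangent_boundary q c"
      by (force simp: tangent_boundary_def tangent_region_def closed_tangent_region_def
          active_normals_def not_less)
  qed
  show "tangent_boundary q c \<subseteq> frontier (tangent_region q c)"
  proof
    fix w assume w: "w \<in> tangent_boundary q c"
    then obtain m where m: "m \<in> normal_arc q" "inner (w - c) m = 2"
      by (auto simp: tangent_boundary_def active_normals_def)
    then have "w \<noteq> c" "w \<notin> tangent_region q c" by (auto simp: tangent_region_def intro!: bexI[of _ m])
    have "open_segment c w \<subseteq> tangent_region q c"
      using w open_segment_subset_tangent_region by (simp add: tangent_boundary_def)
    then have "closed_segment c w \<subseteq> closure (tangent_region q c)"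
      using closure_mono closure_open_segment \<open>w \<noteq> c\<close> by metis
    then show "w \<in> frontier (tangent_region q c)"
      using \<open>w \<notin> tangent_region q c\<close> open_tangent_region[OF assms]
      by (auto simp: frontier_def interior_open)
  qed
qed

section \<open>Vippodromes\<close>

lemma convex_thickening:
  fixes S :: "'a::real_normed_vector set"
  assumes "convex S"
  shows "convex {u. \<exists>z\<in>S. dist u z < r}"
  unfolding convex_def
proof clarify
  fix u1 u2 z1 z2 and s1 s2 :: real
  assume z1: "z1 \<in> S" "dist u1 z1 < r" and z2: "z2 \<in> S" "dist u2 z2 < r"
    and s: "0 \<le> s1" "0 \<le> s2" "s1 + s2 = 1"
  have "s1 *\<^sub>R z1 + s2 *\<^sub>R z2 \<in> S" using assms z1(1) z2(1) s unfolding convex_def by blast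
  moreover have "s1 *\<^sub>R u1 + s2 *\<^sub>R u2 - (s1 *\<^sub>R z1 + s2 *\<^sub>R z2) = s1 *\<^sub>R (u1 - z1) + s2 *\<^sub>R (u2 - z2)"
    by (simp add: algebra_simps)
  then have "dist (s1 *\<^sub>R u1 + s2 *\<^sub>R u2) (s1 *\<^sub>R z1 + s2 *\<^sub>R z2) \<le> s1 * dist u1 z1 + s2 * dist u2 z2"
    using s norm_triangle_ineq[of "s1 *\<^sub>R (u1 - z1)" "s2 *\<^sub>R (u2 - z2)"] by (simp add: dist_norm)
  moreover have "s1 * dist u1 z1 + s2 * dist u2 z2 < s1 * r + s2 * r"
  proof (cases "s1 = 0")
    case False
    then have "s1 * dist u1 z1 < s1 * r" using s(1) z1(2) by simp
    moreover have "s2 * dist u2 z2 \<le> s2 * r" using s(2) z2(2) by (simp add: mult_left_mono)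
    ultimately show ?thesis by linarith
  qed (use s z2(2) in simp)
  moreover have "s1 * r + s2 * r = r" using s(3) by (simp flip: distrib_right)
  ultimately show "\<exists>z\<in>S. dist (s1 *\<^sub>R u1 + s2 *\<^sub>R u2) z < r" by force
qed

lemma ball_Int_hull_balls_nonempty_iff:
  fixes a x y :: "'a::real_normed_vector"
  shows "ball a 1 \<inter> convex hull (ball x 1 \<union> ball y 1) \<noteq> {} \<longleftrightarrow> (\<exists>z\<in>closed_segment x y. dist a z < 2)"
proof
  define R where "R = {u. \<exists>z\<in>closed_segment x y. dist u z < 1}"
  have "convex R" unfolding R_def by (intro convex_thickening convex_closed_segment)
  moreover have "ball x 1 \<union> ball y 1 \<subseteq> R"
    unfolding R_def by (auto simp: dist_commute intro: bexI[of _ x] bexI[of _ y])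
  ultimately have hull: "convex hull (ball x 1 \<union> ball y 1) \<subseteq> R" by (simp add: hull_minimal)
  assume "ball a 1 \<inter> convex hull (ball x 1 \<union> ball y 1) \<noteq> {}"
  then obtain u where "u \<in> ball a 1" "u \<in> R" using hull by blast
  then obtain z where "dist a u < 1" "z \<in> closed_segment x y" "dist u z < 1"
    by (auto simp: R_def)
  then show "\<exists>z\<in>closed_segment x y. dist a z < 2"
    using dist_triangle[of a z u] by (intro bexI[of _ z]) auto
next
  assume "\<exists>z\<in>closed_segment x y. dist a z < 2"
  then obtain z t where z: "dist a z < 2" "0 \<le> t" "t \<le> 1" "z = (1 - t) *\<^sub>R x + t *\<^sub>R y"
    by (auto simp: closed_segment_def)
  \<comment> \<open>The midpoint of a and z lies in both sets.\<close>
  define e where "e = midpoint a z - z"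
  have "norm e < 1" using z(1) dist_midpoint(4)[of a z] by (simp add: e_def dist_norm)
  then have "x + e \<in> convex hull (ball x 1 \<union> ball y 1)" "y + e \<in> convex hull (ball x 1 \<union> ball y 1)"
    by (auto intro: hull_inc simp: dist_norm)
  then have "(1 - t) *\<^sub>R (x + e) + t *\<^sub>R (y + e) \<in> convex hull (ball x 1 \<union> ball y 1)"
    using z(2,3) by (intro convexD[OF convex_convex_hull]) auto
  moreover have "(1 - t) *\<^sub>R (x + e) + t *\<^sub>R (y + e) = midpoint a z"
    using z(4) by (simp add: e_def algebra_simps)
  moreover have "dist a (midpoint a z) < 1"
    using z(1) by (simp add: dist_midpoint)
  ultimately show "ball a 1 \<inter> convex hull (ball x 1 \<union> ball y 1) \<noteq> {}" by auto
qed

lemma add_mem_tangent_region_iff: "v + x \<in> tangent_region q c \<longleftrightarrow> x \<in> tangent_region q (c - v)"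
  by (simp add: tangent_region_def algebra_simps)

lemma diff_mem_tangent_region_iff: "a - v \<in> tangent_region q c \<longleftrightarrow> v \<in> tangent_region (- q) (a - c)"
proof -
  have "normal_arc (- q) = uminus ` normal_arc q"
    by (auto simp: normal_arc_def image_iff) (metis add.inverse_inverse inner_minus_right norm_minus_cancel)
  then show ?thesis by (simp add: tangent_region_def inner_diff_left inner_diff_right algebra_simps)
qed

lemma vipp1_eq_tangent_region:
  assumes "norm (b - a) \<ge> 2"
  shows "vipp1 (a, a') (b, b') = tangent_region (b - a) (a - b')"
proof -
  have "vipp1 (a, a') (b, b') = {v. \<exists>z\<in>closed_segment b (b' + v). dist a z < 2}"
    by (simp add: vipp1_def hull_pair_def disc_def ball_Int_hull_balls_nonempty_iff)
  also have "\<dots> = {v. b' + v \<in> tangent_region (b - a) a}"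
    using tangent_region_eq_segments[OF assms] by simp
  finally show ?thesis by (simp add: add_mem_tangent_region_iff)
qed

lemma vipp2_eq_tangent_region:
  assumes "norm (b' - a') \<ge> 2"
  shows "vipp2 (a, a') (b, b') = tangent_region (b' - a') (a - b')"
proof -
  have "vipp2 (a, a') (b, b') = {v. \<exists>z\<in>closed_segment a (a' + v). dist (b' + v) z < 2}"
    by (simp add: vipp2_def hull_pair_def disc_def ball_Int_hull_balls_nonempty_iff)
  also have "\<dots> = {v. \<exists>z\<in>closed_segment a' (a - v). dist b' z < 2}"
  proof -
    have "closed_segment a (a' + v) = (+) v ` closed_segment (a - v) a'" for v
      using closed_segment_translation[of v "a - v" a'] by (simp add: add.commute)
    then show ?thesis by (auto simp: closed_segment_commute dist_norm)
  qed
  also have "\<dots> = {v. a - v \<in> tangent_region (a' - b') b'}"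
    using tangent_region_eq_segments[of a' b'] assms by (simp add: norm_minus_commute)
  finally show ?thesis by (simp add: diff_mem_tangent_region_iff)
qed

lemma vippodrome_eq_tangent_region:
  assumes "valid_config S" "valid_config T" "bij_betw M S T" "i \<in> {1, 2}"
    and "A \<in> pairs_of M S" "B \<in> pairs_of M S" "A \<noteq> B"
  obtains q c where "norm q \<ge> 2" "vippodrome i A B = tangent_region q c"
proof -
  obtain s t where st: "s \<in> S" "t \<in> S" "A = (s, M s)" "B = (t, M t)" "s \<noteq> t"
    using assms(5-7) by (auto simp: pairs_of_def)
  have "M s \<in> T" "M t \<in> T" "M s \<noteq> M t"
    using assms(3) st by (auto simp: bij_betw_def inj_on_def)
  then have "norm (t - s) \<ge> 2" "norm (M t - M s) \<ge> 2"
    using assms(1,2) st by (auto simp: valid_config_def dist_norm norm_minus_commute)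
  then show ?thesis
    using that vipp1_eq_tangent_region vipp2_eq_tangent_region st(3,4) assms(4)
    by (cases "i = 1") (auto simp: vippodrome_def)
qed

section \<open>Common points of two boundaries\<close>

lemma infinite_tangent_boundary_Int:
  assumes "a \<in> tangent_boundary q1 c1 \<inter> tangent_boundary q2 c2"
    and "b \<in> tangent_boundary q1 c1 \<inter> tangent_boundary q2 c2" and "a \<noteq> b"
    and "m1 \<in> active_normals q1 c1 a" "m1 \<in> active_normals q1 c1 b"
    and "m2 \<in> active_normals q2 c2 a" "m2 \<in> active_normals q2 c2 b"
  shows "infinite (tangent_boundary q1 c1 \<inter> tangent_boundary q2 c2)"
proof -
  have "closed_segment a b \<subseteq> tangent_boundary q1 c1 \<inter> tangent_boundary q2 c2"
    using assms closed_segment_subset_tangent_boundary by (simp add: tangent_boundary_def)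
  then show ?thesis using assms(3) finite_closed_segment finite_subset by blast
qed

lemma card_tangent_boundary_Int_degenerate:
  assumes q1: "norm q1 = 2" and fin: "finite (tangent_boundary q1 c1 \<inter> tangent_boundary q2 c2)"
  shows "card (tangent_boundary q1 c1 \<inter> tangent_boundary q2 c2) \<le> 2"
proof (rule ccontr)
  let ?Z = "tangent_boundary q1 c1 \<inter> tangent_boundary q2 c2"
  define m where "m = (1/2) *\<^sub>R q1"
  have active1: "m \<in> active_normals q1 c1 w" if "w \<in> ?Z" for w
    using that normal_arc_eq_singleton[OF q1] by (auto simp: m_def tangent_boundary_def active_normals_def)
  \<comment> \<open>The first boundary is a line, so a middle one of three common points gives a segment.\<close>
  have no_middle: False if abd: "a \<in> ?Z" "b \<in> ?Z" "d \<in> ?Z" "b \<noteq> d" "a \<in> open_segment b d" for a b d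
  proof -
    obtain n where n: "n \<in> active_normals q2 c2 a"
      using abd(1) unfolding tangent_boundary_def by blast
    then have "n \<in> active_normals q2 c2 b \<and> n \<in> active_normals q2 c2 d"
      using abd active_normal_open_segment by (auto simp: tangent_boundary_def)
    then show False
      using infinite_tangent_boundary_Int[OF abd(2,3,4) active1 active1] abd fin by blast
  qed
  assume "\<not> card ?Z \<le> 2"
  then obtain T where "T \<subseteq> ?Z" "card T = 3" using obtain_subset_with_card_n[of 3 ?Z] by force
  then obtain x y z where xyz: "x \<in> ?Z" "y \<in> ?Z" "z \<in> ?Z" "x \<noteq> y" "x \<noteq> z" "y \<noteq> z"
    by (auto simp: card_3_iff)
  have "collinear {x, y, z}"
    unfolding collinear_def
  proof (intro exI[of _ "rot90 m"] ballI)
    fix a b assume "a \<in> {x, y, z}" "b \<in> {x, y, z}"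
    then have "inner (a - c1) m = 2" "inner (b - c1) m = 2"
      using xyz active1 by (auto simp: active_normals_def)
    moreover have "inner (a - b) m = inner (a - c1) m - inner (b - c1) m"
      by (simp add: inner_diff_left)
    ultimately have "inner (a - b) m = 0" by simp
    moreover have "norm m = 1" using q1 by (simp add: m_def)
    ultimately show "\<exists>c. a - b = c *\<^sub>R rot90 m" using orthogonal_unit_expansion by blast
  qed
  then have "between (y, z) x \<or> between (z, x) y \<or> between (x, y) z"
    using collinear_between_cases by blast
  then show False
    using no_middle[of x y z] no_middle[of y z x] no_middle[of z x y] xyz
    by (auto simp: between_mem_segment open_segment_def)
qed

lemma card_tangent_boundary_Int_opposite_normals:
  assumes fin: "finite (tangent_boundary q1 c1 \<inter> tangent_boundary q2 c2)"
    and z: "z \<in> tangent_boundary q1 c1 \<inter> tangent_boundary q2 c2"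
    and n: "n \<in> active_normals q1 c1 z" "- n \<in> active_normals q2 c2 z"
  shows "card (tangent_boundary q1 c1 \<inter> tangent_boundary q2 c2) \<le> 1"
proof -
  let ?Z = "tangent_boundary q1 c1 \<inter> tangent_boundary q2 c2"
  \<comment> \<open>Supporting from both sides, the two half-planes pin every common point to one line.\<close>
  have both: "n \<in> active_normals q1 c1 w \<and> - n \<in> active_normals q2 c2 w" if "w \<in> ?Z" for w
  proof -
    have "inner (z - w) n \<ge> 0" "inner (z - w) (- n) \<ge> 0"
      using active_normal_supports[of w q1 c1 n z] active_normal_supports[of w q2 c2 "- n" z] that n
      by (auto simp: tangent_boundary_def)
    then have "inner (z - w) n = 0" by simp
    then show ?thesis using n by (auto simp: active_normals_def inner_diff_left)
  qed
  have "a = b" if "a \<in> ?Z" "b \<in> ?Z" for a b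
    using infinite_tangent_boundary_Int[OF that _ both[OF that(1), THEN conjunct1]
        both[OF that(2), THEN conjunct1] both[OF that(1), THEN conjunct2] both[OF that(2), THEN conjunct2]]
      fin by blast
  then show ?thesis using fin by (simp add: card_le_Suc0_iff_eq)
qed

lemma infinite_normal_arc_Int:
  assumes m1: "m1 \<in> normal_arc q1 \<inter> normal_arc q2" and m2: "m2 \<in> normal_arc q1 \<inter> normal_arc q2"
    and "m1 \<noteq> m2"
  shows "infinite (normal_arc q1 \<inter> normal_arc q2)"
proof
  assume fin: "finite (normal_arc q1 \<inter> normal_arc q2)"
  define y where "y t = (1 - t) *\<^sub>R m1 + t *\<^sub>R m2" for t :: real
  have normal: "inner q (y t) \<ge> 2 * norm (y t) \<and> y t \<noteq> 0"
    if t: "t \<in> {0..1}" and "m1 \<in> normal_arc q" "m2 \<in> normal_arc q" for t q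
  proof -
    have "inner q (y t) = (1 - t) * inner q m1 + t * inner q m2" by (simp add: y_def inner_add_right)
    also have "\<dots> \<ge> (1 - t) * 2 + t * 2"
      using that by (intro add_mono mult_left_mono) (auto simp: normal_arc_def)
    finally have "inner q (y t) \<ge> 2" by (simp add: algebra_simps)
    moreover have "norm (y t) \<le> (1 - t) * norm m1 + t * norm m2"
      unfolding y_def using t norm_triangle_ineq[of "(1 - t) *\<^sub>R m1" "t *\<^sub>R m2"] by simp
    then have "norm (y t) \<le> 1" using that by (auto simp: normal_arc_def)
    ultimately show ?thesis by auto
  qed
  have "sgn (y t) \<in> normal_arc q" if "t \<in> {0..1}" "m1 \<in> normal_arc q" "m2 \<in> normal_arc q" for t q
  proof -
    have "inner q (y t) / norm (y t) \<ge> 2" using normal[OF that] by (simp add: pos_le_divide_eq)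
    moreover have "inner q (sgn (y t)) = inner q (y t) / norm (y t)"
      by (simp add: sgn_div_norm field_simps)
    ultimately show ?thesis using normal[OF that] by (simp add: normal_arc_def norm_sgn)
  qed
  then have sub: "(\<lambda>t. sgn (y t)) ` {0..1} \<subseteq> normal_arc q1 \<inter> normal_arc q2" using m1 m2 by blast
  have "continuous_on {0..1} (\<lambda>t. sgn (y t))"
    unfolding sgn_div_norm y_def using normal[of _ q1] m1 m2
    by (intro continuous_intros) (auto simp: y_def)
  then have "connected ((\<lambda>t. sgn (y t)) ` {0..1})" by (rule connected_continuous_image) simp
  moreover have "finite ((\<lambda>t. sgn (y t)) ` {0..1})" using sub fin finite_subset by blast
  moreover have "sgn (y 0) = m1" "sgn (y 1) = m2"
    using m1 m2 by (simp_all add: y_def normal_arc_def sgn_div_norm)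
  then have "m1 \<in> (\<lambda>t. sgn (y t)) ` {0..1}" "m2 \<in> (\<lambda>t. sgn (y t)) ` {0..1}"
    by (metis atLeastAtMost_iff image_eqI order_refl zero_le_one)+
  ultimately show False using \<open>m1 \<noteq> m2\<close> connected_finite_iff_sing by (metis empty_iff singletonD)
qed

lemma unit_circle_slope_le:
  fixes x0 ya xm ym :: real
  assumes x0: "0 < x0" "x0 \<le> xm" and e: "x0\<^sup>2 + ya\<^sup>2 = 1" "xm\<^sup>2 + ym\<^sup>2 = 1" and "ya \<noteq> 0"
  shows "\<bar>ym / ya\<bar> \<le> xm / x0"
proof -
  have "x0\<^sup>2 \<le> xm\<^sup>2" using x0 by (simp add: power_mono)
  moreover have ym2: "ym\<^sup>2 = 1 - xm\<^sup>2" and ya2: "ya\<^sup>2 = 1 - x0\<^sup>2" using e by simp_all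
  have "ym\<^sup>2 * x0\<^sup>2 = x0\<^sup>2 - xm\<^sup>2 * x0\<^sup>2" "xm\<^sup>2 * ya\<^sup>2 = xm\<^sup>2 - xm\<^sup>2 * x0\<^sup>2"
    unfolding ym2 ya2 by (simp_all add: algebra_simps)
  ultimately have "(\<bar>ym\<bar> * x0)\<^sup>2 \<le> (xm * \<bar>ya\<bar>)\<^sup>2" by (simp add: power_mult_distrib)
  then have "\<bar>ym\<bar> * x0 \<le> xm * \<bar>ya\<bar>" by (rule power2_le_imp_le) (use x0 in auto)
  then show ?thesis using x0 assms(5) by (simp add: field_simps abs_divide)
qed

definition arc_endpoints :: "real^2 \<Rightarrow> (real^2) set" where
  "arc_endpoints q = {d. norm d = 1 \<and> inner q d = 2}"

lemma finite_card_arc_endpoints: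
  assumes "norm q > 2"
  shows "finite (arc_endpoints q)" "card (arc_endpoints q) \<le> 2"
  using finite_unit_circle_Int_line[of q 2] assms by (cases "q = 0"; simp add: arc_endpoints_def)+

lemma normal_arc_cone:
  fixes q a b m :: "real^2"
  assumes q: "norm q > 2" and "a \<in> arc_endpoints q" "b \<in> arc_endpoints q"
    and "a \<noteq> b" and m: "m \<in> normal_arc q"
  obtains \<alpha> \<beta> where "\<alpha> \<ge> 0" "\<beta> \<ge> 0" "m = \<alpha> *\<^sub>R a + \<beta> *\<^sub>R b"
proof -
  have a: "norm a = 1" "inner q a = 2" and b: "norm b = 1" "inner q b = 2"
    using assms(2,3) by (simp_all add: arc_endpoints_def)
  define u where "u = sgn q"
  have q0: "q \<noteq> 0"
  proof
    assume "q = 0"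
    then show False using q by simp
  qed
  then have u: "norm u = 1" by (simp add: u_def norm_sgn)
  define x0 where "x0 = 2 / norm q"
  have x0: "x0 > 0" using q q0 by (simp add: x0_def)
  have inner_u: "inner v u = inner q v / norm q" for v
    using q0 by (simp add: u_def sgn_div_norm inner_commute divide_inverse_commute)
  define ya where "ya = inner a (rot90 u)"
  define yb where "yb = inner b (rot90 u)"
  define xm where "xm = inner m u"
  define ym where "ym = inner m (rot90 u)"
  have xa: "inner a u = x0" and xb: "inner b u = x0" using a b by (simp_all add: inner_u x0_def)
  have xm: "xm \<ge> x0" using m q by (simp add: xm_def x0_def inner_u normal_arc_def divide_right_mono)
  have ea: "x0\<^sup>2 + ya\<^sup>2 = 1" and eb: "x0\<^sup>2 + yb\<^sup>2 = 1" and em: "xm\<^sup>2 + ym\<^sup>2 = 1"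
    using norm_squared_expansion[OF u, of a] norm_squared_expansion[OF u, of b]
      norm_squared_expansion[OF u, of m] a b m xa xb
    by (simp_all add: ya_def yb_def xm_def ym_def normal_arc_def)
  have "ya \<noteq> yb"
    using orthonormal_expansion[OF u, of a] orthonormal_expansion[OF u, of b] xa xb \<open>a \<noteq> b\<close>
    by (auto simp: ya_def yb_def)
  moreover have "ya\<^sup>2 = yb\<^sup>2" using ea eb by simp
  ultimately have yb: "yb = - ya" and ya: "ya \<noteq> 0" by (auto simp: power2_eq_iff)
  have key: "\<bar>ym / ya\<bar> \<le> xm / x0" using unit_circle_slope_le x0 xm ea em ya by blast
  define \<alpha> where "\<alpha> = (xm / x0 + ym / ya) / 2"
  define \<beta> where "\<beta> = (xm / x0 - ym / ya) / 2"
  have "\<alpha> \<ge> 0" "\<beta> \<ge> 0"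
    using key abs_ge_self[of "ym / ya"] abs_ge_minus_self[of "ym / ya"] by (simp_all add: \<alpha>_def \<beta>_def)
  moreover have "m = \<alpha> *\<^sub>R a + \<beta> *\<^sub>R b"
  proof -
    have "inner (\<alpha> *\<^sub>R a + \<beta> *\<^sub>R b) u = xm" "inner (\<alpha> *\<^sub>R a + \<beta> *\<^sub>R b) (rot90 u) = ym"
      using xa xb x0 ya yb
      by (simp_all add: inner_add_left \<alpha>_def \<beta>_def ya_def[symmetric] yb_def[symmetric] field_simps)
    then show ?thesis
      using orthonormal_expansion[OF u, of m] orthonormal_expansion[OF u, of "\<alpha> *\<^sub>R a + \<beta> *\<^sub>R b"]
      by (simp add: xm_def ym_def)
  qed
  ultimately show ?thesis using that by blast
qed

definition first_crossing :: "(real \<Rightarrow> real) \<Rightarrow> real \<Rightarrow> bool" where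
  "first_crossing \<phi> T \<longleftrightarrow> 0 \<le> T \<and> T \<le> 1 \<and> \<phi> T = 0
     \<and> (T = 0 \<longrightarrow> (\<exists>\<^sub>F t in at_right 0. \<phi> t < 0))
     \<and> (T = 1 \<longrightarrow> (\<forall>t\<in>{0..<1}. \<phi> t \<ge> 0))"

lemma first_crossing_exists:
  fixes \<phi> :: "real \<Rightarrow> real"
  assumes cont: "continuous_on {0..1} \<phi>" and "\<phi> 0 \<ge> 0" "\<phi> 1 \<le> 0"
  shows "\<exists>T. first_crossing \<phi> T"
proof (cases "\<forall>t\<in>{0..1}. \<phi> t \<ge> 0")
  case True
  then have "\<phi> 1 \<ge> 0" by simp
  then have "\<phi> 1 = 0" using assms(3) by simp
  then show ?thesis using True by (intro exI[of _ 1]) (auto simp: first_crossing_def)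
next
  case False
  define X where "X = {t\<in>{0..1}. \<phi> t < 0}"
  define T where "T = Inf X"
  have X: "X \<noteq> {}" "bdd_below X" using False by (auto simp: X_def bdd_below_def)
  have "closed {t\<in>{0..1}. \<phi> t \<le> 0}"
    using continuous_on_closed_Collect_le[OF cont continuous_on_const] by simp
  moreover have "X \<subseteq> {t\<in>{0..1}. \<phi> t \<le> 0}" by (auto simp: X_def)
  ultimately have "T \<in> {t\<in>{0..1}. \<phi> t \<le> 0}"
    using closure_contains_Inf[OF X] closure_minimal unfolding T_def by blast
  then have T: "0 \<le> T" "T \<le> 1" "\<phi> T \<le> 0" by auto
  have before: "\<phi> t \<ge> 0" if "0 \<le> t" "t < T" for t
    using cInf_lower[OF _ X(2), of t] that T(2) by (force simp: X_def T_def)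
  have "\<phi> T \<ge> 0"
  proof (cases "T = 0")
    case False
    have "closed {t\<in>{0..1}. 0 \<le> \<phi> t}"
      using continuous_on_closed_Collect_le[OF continuous_on_const cont] by simp
    moreover have "{0..<T} \<subseteq> {t\<in>{0..1}. 0 \<le> \<phi> t}" using before T(2) by auto
    moreover have "T \<in> closure {0..<T}" using False T(1) by simp
    ultimately show ?thesis using closure_minimal by blast
  qed (use assms(2) in simp)
  moreover have "\<exists>\<^sub>F t in at_right 0. \<phi> t < 0" if T0: "T = 0"
    unfolding frequently_def eventually_at_right_field
  proof clarify
    fix b :: real assume "0 < b" "\<forall>y>0. y < b \<longrightarrow> \<not> \<phi> y < 0"
    moreover obtain x where "x \<in> X" "x < b" using cInf_less_iff[OF X] T0 \<open>0 < b\<close> by (auto simp: T_def)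
    ultimately show False using assms(2) by (cases "x = 0") (auto simp: X_def)
  qed
  ultimately show ?thesis using T before by (intro exI[of _ T]) (auto simp: first_crossing_def)
qed

lemma eventually_pos_along_segment:
  fixes g :: "real^2 \<Rightarrow> real"
  assumes "isCont g d" "g d > 0"
  shows "\<forall>\<^sub>F s in at_right 0. g ((1 - s) *\<^sub>R d + s *\<^sub>R n) > 0"
proof -
  have "((\<lambda>s. (1 - s) *\<^sub>R d + s *\<^sub>R n) \<longlongrightarrow> d) (at_right 0)"
    by (auto intro!: tendsto_eq_intros)
  from isCont_tendsto_compose[OF assms(1) this] show ?thesis
    using assms(2) order_tendstoD(1) by blast
qed

lemma eventually_inside_normal_arc:
  fixes q d n :: "real^2"
  assumes d: "norm d = 1" and n: "norm n = 1" and "inner q d = 2" and B: "inner (q - 2 *\<^sub>R d) n > 0"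
  shows "\<forall>\<^sub>F s in at_right 0. inner q ((1 - s) *\<^sub>R d + s *\<^sub>R n) > 2 * norm ((1 - s) *\<^sub>R d + s *\<^sub>R n)"
proof -
  define y where "y s = (1 - s) *\<^sub>R d + s *\<^sub>R n" for s :: real
  define A where "A = inner q n - 2"
  define C where "C = A\<^sup>2 - 8 * (1 - inner d n)"
  have B_eq: "inner (q - 2 *\<^sub>R d) n = A + 2 * (1 - inner d n)"
    by (simp add: A_def inner_diff_left algebra_simps)
  have key: "(inner q (y s))\<^sup>2 - (2 * norm (y s))\<^sup>2 = s * (4 * inner (q - 2 *\<^sub>R d) n + s * C)" for s
  proof -
    have "inner q (y s) = 2 + s * A"
      using assms(3) by (simp add: y_def A_def inner_add_right algebra_simps)
    moreover have "inner d d = 1" "inner n n = 1" using d n by (simp_all flip: power2_norm_eq_inner)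
    then have "(norm (y s))\<^sup>2 = (1 - s)\<^sup>2 + 2 * s * (1 - s) * inner d n + s\<^sup>2"
      unfolding power2_norm_eq_inner
      by (simp add: y_def inner_add_left inner_add_right inner_commute power2_eq_square algebra_simps)
    ultimately show ?thesis unfolding B_eq C_def by (simp add: power2_eq_square algebra_simps)
  qed
  have "((\<lambda>s. 4 * inner (q - 2 *\<^sub>R d) n + s * C) \<longlongrightarrow> 4 * inner (q - 2 *\<^sub>R d) n) (at_right 0)"
    by (auto intro!: tendsto_eq_intros)
  then have "\<forall>\<^sub>F s in at_right 0. 4 * inner (q - 2 *\<^sub>R d) n + s * C > 0"
    using B order_tendstoD(1) by fastforce
  moreover have "\<forall>\<^sub>F s in at_right 0. inner q (y s) > 0"
    unfolding y_def using assms(3) by (intro eventually_pos_along_segment) (auto intro: continuous_intros)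
  ultimately have "\<forall>\<^sub>F s in at_right 0. inner q (y s) > 2 * norm (y s)"
    using eventually_at_right_less[of 0]
  proof eventually_elim
    case (elim s)
    then have "s * (4 * inner (q - 2 *\<^sub>R d) n + s * C) > 0" by simp
    then have "(2 * norm (y s))\<^sup>2 < (inner q (y s))\<^sup>2" using key[of s] by linarith
    then show ?case using elim(2) by (rule power2_less_imp_less[OF _ less_imp_le])
  qed
  then show ?thesis by (simp add: y_def)
qed

lemma unit_vectors_opposite_sides:
  fixes d v w a b :: "real^2"
  assumes d: "norm d = 1" and a: "norm a = 1" "a \<noteq> d" "a \<noteq> - d" and b: "norm b = 1" "b \<noteq> d" "b \<noteq> - d"
    and v: "v \<noteq> 0" "inner v d = 0" "inner v a * inner v b \<le> 0"
    and w: "w \<noteq> 0" "inner w d = 0"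
  shows "inner w a > 0 \<or> inner w b > 0"
proof -
  define r where "r = rot90 d"
  have "inner r a \<noteq> 0" "inner r b \<noteq> 0"
    using inner_rot90_unit_neq_0 d a b by (auto simp: r_def)
  obtain k l where vw: "v = k *\<^sub>R r" "w = l *\<^sub>R r"
    using orthogonal_unit_expansion d v(2) w(2) unfolding r_def by blast
  then have "k \<noteq> 0" "l \<noteq> 0" using v(1) w(1) by auto
  have "k\<^sup>2 * (inner r a * inner r b) \<le> 0" using v(3) by (simp add: vw power2_eq_square algebra_simps)
  then have "inner r a * inner r b < 0"
    using \<open>k \<noteq> 0\<close> \<open>inner r a \<noteq> 0\<close> \<open>inner r b \<noteq> 0\<close> by (auto simp: mult_le_0_iff less_le)
  moreover have "inner w a * inner w b = l\<^sup>2 * (inner r a * inner r b)"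
    by (simp add: vw power2_eq_square algebra_simps)
  ultimately have "inner w a * inner w b < 0"
    using \<open>l \<noteq> 0\<close> by (simp add: mult_pos_neg)
  then show ?thesis by (auto simp: mult_less_0_iff)
qed

lemma arc_endpoint_tangent:
  fixes q d :: "real^2"
  assumes "norm d = 1" "inner q d = 2" "norm q > 2"
  shows "q - 2 *\<^sub>R d \<noteq> 0" "inner (q - 2 *\<^sub>R d) d = 0"
proof -
  show "q - 2 *\<^sub>R d \<noteq> 0" using assms(1,3) by auto
  have "inner d d = 1" using assms(1) by (simp flip: power2_norm_eq_inner)
  then show "inner (q - 2 *\<^sub>R d) d = 0" using assms(2) by (simp add: inner_diff_left)
qed

lemma circle_point_in_tangent_boundary:
  assumes "d \<in> normal_arc q"
  shows "c + 2 *\<^sub>R d \<in> tangent_boundary q c" "d \<in> active_normals q c (c + 2 *\<^sub>R d)"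
proof -
  have d: "norm d = 1" using assms by (simp add: normal_arc_def)
  have "inner (2 *\<^sub>R d) m \<le> 2" if "m \<in> normal_arc q" for m
    using norm_cauchy_schwarz[of d m] that d by (auto simp: normal_arc_def)
  moreover have "inner d d = 1" using d by (simp flip: power2_norm_eq_inner)
  ultimately show "d \<in> active_normals q c (c + 2 *\<^sub>R d)" "c + 2 *\<^sub>R d \<in> tangent_boundary q c"
    using assms by (auto simp: tangent_boundary_def closed_tangent_region_def active_normals_def)
qed

lemma active_normals_shift:
  assumes "m \<in> active_normals q c z'" "inner (z - z') m = 0"
  shows "m \<in> active_normals q c z"
proof -
  have "inner (z - c) m = inner (z' - c) m + inner (z - z') m" by (simp add: inner_diff_left)
  then show ?thesis using assms by (simp add: active_normals_def)
qed

lemma subsingleton_finite_card_le_1: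
  assumes "\<And>a b. a \<in> A \<Longrightarrow> b \<in> A \<Longrightarrow> a = b"
  shows "finite A \<and> card A \<le> 1"
proof (cases "A = {}")
  case False
  then obtain a where "A = {a}" using assms by blast
  then show ?thesis by simp
qed simp

locale boundary_pair =
  fixes q1 q2 c1 c2 :: "real^2"
  assumes norm_q1: "norm q1 > 2" and norm_q2: "norm q2 > 2"
    and finite_crossings: "finite (tangent_boundary q1 c1 \<inter> tangent_boundary q2 c2)"
    and no_opposite_normals: "\<And>z n. z \<in> tangent_boundary q1 c1 \<inter> tangent_boundary q2 c2 \<Longrightarrow>
      n \<in> active_normals q1 c1 z \<Longrightarrow> - n \<notin> active_normals q2 c2 z"
begin

definition crossings :: "(real^2) set" where
  "crossings = tangent_boundary q1 c1 \<inter> tangent_boundary q2 c2"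

definition common_normals :: "real^2 \<Rightarrow> (real^2) set" where
  "common_normals z = active_normals q1 c1 z \<inter> active_normals q2 c2 z"

text \<open>A common active normal is preferred, so that normal1 z \<noteq> normal2 z forces the two sets of
  active normals at z to be disjoint.\<close>
definition normal1 :: "real^2 \<Rightarrow> real^2" where
  "normal1 z = (if common_normals z \<noteq> {} then SOME m. m \<in> common_normals z
     else SOME m. m \<in> active_normals q1 c1 z)"

definition normal2 :: "real^2 \<Rightarrow> real^2" where
  "normal2 z = (if common_normals z \<noteq> {} then normal1 z else SOME m. m \<in> active_normals q2 c2 z)"

lemma normal1_active: "z \<in> crossings \<Longrightarrow> normal1 z \<in> active_normals q1 c1 z"
  and normal2_active: "z \<in> crossings \<Longrightarrow> normal2 z \<in> active_normals q2 c2 z"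
proof -
  assume "z \<in> crossings"
  then have "active_normals q1 c1 z \<noteq> {}" "active_normals q2 c2 z \<noteq> {}"
    by (simp_all add: crossings_def tangent_boundary_def)
  moreover have "common_normals z \<noteq> {} \<Longrightarrow> normal1 z \<in> common_normals z \<and> normal2 z \<in> common_normals z"
    by (simp add: normal1_def normal2_def some_in_eq)
  ultimately show "normal1 z \<in> active_normals q1 c1 z" "normal2 z \<in> active_normals q2 c2 z"
    by (auto simp: normal1_def normal2_def some_in_eq common_normals_def split: if_splits)
qed

lemma normal1_unit: "z \<in> crossings \<Longrightarrow> norm (normal1 z) = 1"
  and normal2_unit: "z \<in> crossings \<Longrightarrow> norm (normal2 z) = 1"
  using normal1_active normal2_active by (auto simp: active_normals_def normal_arc_def)

lemma common_normals_empty: "normal1 z \<noteq> normal2 z \<Longrightarrow> common_normals z = {}"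
  by (auto simp: normal2_def split: if_splits)

lemma normal2_neq_uminus_normal1: "z \<in> crossings \<Longrightarrow> normal2 z \<noteq> - normal1 z"
  using no_opposite_normals normal1_active normal2_active by (force simp: crossings_def)

lemma normal_supports:
  assumes "z \<in> crossings" "w \<in> crossings"
  shows "inner (z - w) (normal1 z) \<ge> 0" "inner (z - w) (normal2 z) \<ge> 0"
  using active_normal_supports[OF _ normal1_active[OF assms(1)], of w]
    active_normal_supports[OF _ normal2_active[OF assms(1)], of w] assms(2)
  by (auto simp: crossings_def tangent_boundary_def)

lemma shared_normal_contradiction:
  assumes "z \<in> crossings" "z' \<in> crossings" "z \<noteq> z'"
    and "d \<in> active_normals q1 c1 z" "d \<in> active_normals q2 c2 z'" "inner (z - z') d = 0"
  shows False
proof -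
  have "inner (z' - z) d = 0" using assms(6) by (simp add: inner_diff_left)
  then have "d \<in> active_normals q1 c1 z'" "d \<in> active_normals q2 c2 z"
    using assms(4-6) active_normals_shift by blast+
  then show False
    using infinite_tangent_boundary_Int[of z q1 c1 q2 c2 z' d d] assms finite_crossings
    by (auto simp: crossings_def)
qed

definition offset :: "real^2" where
  "offset = c2 - c1"

text \<open>For unit y, inner q1 y - 2 and 2 - inner q2 y test y against the two normal arcs, and
  inner offset y compares the support values of the two regions in direction y.\<close>
definition sign_fun :: "real^2 \<Rightarrow> real" where
  "sign_fun y = max (min (inner offset y) (inner q1 y - 2 * norm y)) (2 * norm y - inner q2 y)"

lemma inner_offset: "inner offset m = inner (z - c1) m - inner (z - c2) m"
  by (simp add: offset_def inner_diff_left)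

lemma sign_fun_scaleR:
  assumes "a \<ge> 0"
  shows "sign_fun (a *\<^sub>R y) = a * sign_fun y"
proof -
  have "sign_fun (a *\<^sub>R y) = max (min (a * inner offset y) (a * (inner q1 y - 2 * norm y)))
      (a * (2 * norm y - inner q2 y))"
    using assms by (simp add: sign_fun_def algebra_simps)
  also have "\<dots> = a * sign_fun y"
    using assms by (simp add: sign_fun_def max_mult_distrib_left min_mult_distrib_left)
  finally show ?thesis .
qed

lemma isCont_sign_fun: "isCont sign_fun y"
  unfolding sign_fun_def by (intro continuous_intros)

lemma inner_offset_normal1:
  assumes "z \<in> crossings" "normal1 z \<in> normal_arc q2"
  shows "inner offset (normal1 z) \<ge> 0"
    and "normal1 z \<noteq> normal2 z \<Longrightarrow> inner offset (normal1 z) > 0"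
proof -
  have "inner (z - c2) (normal1 z) \<le> 2" "inner (z - c1) (normal1 z) = 2"
    using assms normal1_active[OF assms(1)]
    by (auto simp: crossings_def tangent_boundary_def closed_tangent_region_def active_normals_def)
  then show ge: "inner offset (normal1 z) \<ge> 0" by (simp add: inner_offset[of _ z])
  assume "normal1 z \<noteq> normal2 z"
  then have "normal1 z \<notin> active_normals q2 c2 z"
    using common_normals_empty normal1_active[OF assms(1)] by (auto simp: common_normals_def)
  then show "inner offset (normal1 z) > 0"
    using ge assms(2) \<open>inner (z - c1) (normal1 z) = 2\<close>
    by (auto simp: inner_offset[of _ z] active_normals_def)
qed

lemma inner_offset_normal2:
  assumes "z \<in> crossings" "normal2 z \<in> normal_arc q1"
  shows "inner offset (normal2 z) \<le> 0"
    and "normal1 z \<noteq> normal2 z \<Longrightarrow> inner offset (normal2 z) < 0"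
proof -
  have "inner (z - c1) (normal2 z) \<le> 2" "inner (z - c2) (normal2 z) = 2"
    using assms normal2_active[OF assms(1)]
    by (auto simp: crossings_def tangent_boundary_def closed_tangent_region_def active_normals_def)
  then show le: "inner offset (normal2 z) \<le> 0" by (simp add: inner_offset[of _ z])
  assume "normal1 z \<noteq> normal2 z"
  then have "normal2 z \<notin> active_normals q1 c1 z"
    using common_normals_empty normal2_active[OF assms(1)] by (auto simp: common_normals_def)
  then show "inner offset (normal2 z) < 0"
    using le assms(2) \<open>inner (z - c2) (normal2 z) = 2\<close>
    by (auto simp: inner_offset[of _ z] active_normals_def)
qed

lemma sign_fun_normal1: "z \<in> crossings \<Longrightarrow> sign_fun (normal1 z) \<ge> 0"
  using inner_offset_normal1(1)[of z] normal1_active[of z] normal1_unit[of z]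
  by (cases "normal1 z \<in> normal_arc q2") (auto simp: sign_fun_def active_normals_def normal_arc_def)

lemma sign_fun_normal2: "z \<in> crossings \<Longrightarrow> sign_fun (normal2 z) \<le> 0"
  using inner_offset_normal2(1)[of z] normal2_active[of z] normal2_unit[of z]
  by (cases "normal2 z \<in> normal_arc q1") (auto simp: sign_fun_def active_normals_def normal_arc_def)

lemma normals_independent:
  assumes "z \<in> crossings" "normal1 z \<noteq> normal2 z" "x *\<^sub>R normal1 z + y *\<^sub>R normal2 z = 0"
  shows "x = 0 \<and> y = 0"
  using unit_independent[OF normal1_unit[OF assms(1)] normal2_unit[OF assms(1)] assms(2)[symmetric]
      normal2_neq_uminus_normal1[OF assms(1)] assms(3)] .

definition normal_path :: "real^2 \<Rightarrow> real \<Rightarrow> real^2" where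
  "normal_path z t = (1 - t) *\<^sub>R normal1 z + t *\<^sub>R normal2 z"

lemma normal_path_nonzero:
  assumes "z \<in> crossings" "t \<in> {0..1}"
  shows "normal_path z t \<noteq> 0"
proof
  assume zero: "normal_path z t = 0"
  show False
  proof (cases "normal1 z = normal2 z")
    case True
    then show False using zero normal1_unit[OF assms(1)] by (simp add: normal_path_def algebra_simps)
  next
    case False
    from normals_independent[OF assms(1) False zero[unfolded normal_path_def]] show False by linarith
  qed
qed

definition crossing_time :: "real^2 \<Rightarrow> real" where
  "crossing_time z = (SOME T. first_crossing (\<lambda>t. sign_fun (normal_path z t)) T)"

lemma first_crossing_crossing_time:
  assumes "z \<in> crossings"
  shows "first_crossing (\<lambda>t. sign_fun (normal_path z t)) (crossing_time z)"
proof -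
  have "continuous_on {0..1} (\<lambda>t. sign_fun (normal_path z t))"
    unfolding normal_path_def
    by (intro continuous_on_compose2[OF continuous_at_imp_continuous_on, of UNIV sign_fun]
        continuous_intros) (auto simp: isCont_sign_fun)
  moreover have "sign_fun (normal_path z 0) \<ge> 0" "sign_fun (normal_path z 1) \<le> 0"
    using sign_fun_normal1[OF assms] sign_fun_normal2[OF assms] by (simp_all add: normal_path_def)
  ultimately obtain T where "first_crossing (\<lambda>t. sign_fun (normal_path z t)) T"
    using first_crossing_exists by blast
  then show ?thesis unfolding crossing_time_def by (rule someI)
qed

lemma crossing_time_bounds: "z \<in> crossings \<Longrightarrow> 0 \<le> crossing_time z \<and> crossing_time z \<le> 1"
  using first_crossing_crossing_time by (simp add: first_crossing_def)

definition crossing_dir :: "real^2 \<Rightarrow> real^2" where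
  "crossing_dir z = sgn (normal_path z (crossing_time z))"

lemma crossing_dir_unit: "z \<in> crossings \<Longrightarrow> norm (crossing_dir z) = 1"
  using normal_path_nonzero crossing_time_bounds by (simp add: crossing_dir_def norm_sgn)

lemma sign_fun_crossing_dir:
  assumes "z \<in> crossings"
  shows "sign_fun (crossing_dir z) = 0"
proof -
  let ?p = "normal_path z (crossing_time z)"
  have "sign_fun (crossing_dir z) = inverse (norm ?p) * sign_fun ?p"
    unfolding crossing_dir_def sgn_div_norm by (rule sign_fun_scaleR) simp
  then show ?thesis using first_crossing_crossing_time[OF assms] by (simp add: first_crossing_def)
qed

lemma normal_path_crossing_time:
  "normal_path z (crossing_time z) = norm (normal_path z (crossing_time z)) *\<^sub>R crossing_dir z"
  by (cases "normal_path z (crossing_time z) = 0") (simp_all add: crossing_dir_def sgn_div_norm)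

lemma inner_crossing_dir_nonneg:
  assumes "z \<in> crossings" "inner v (normal1 z) \<ge> 0" "inner v (normal2 z) \<ge> 0"
  shows "inner v (crossing_dir z) \<ge> 0"
proof -
  have "inner v (normal_path z (crossing_time z)) \<ge> 0"
    using assms crossing_time_bounds[OF assms(1)] by (simp add: normal_path_def inner_add_right)
  then show ?thesis by (simp add: crossing_dir_def sgn_div_norm)
qed

lemma crossing_time_eq_0:
  assumes "z \<in> crossings" "crossing_dir z = normal1 z" "normal1 z \<noteq> normal2 z"
  shows "crossing_time z = 0"
proof -
  let ?t = "crossing_time z" and ?l = "norm (normal_path z (crossing_time z))"
  have "(1 - ?t - ?l) *\<^sub>R normal1 z + ?t *\<^sub>R normal2 z = 0"
    using normal_path_crossing_time[of z] assms(2) by (simp add: normal_path_def algebra_simps)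
  from normals_independent[OF assms(1,3) this] show ?thesis by simp
qed

lemma crossing_time_eq_1:
  assumes "z \<in> crossings" "crossing_dir z = normal2 z" "normal1 z \<noteq> normal2 z"
  shows "crossing_time z = 1"
proof -
  let ?t = "crossing_time z" and ?l = "norm (normal_path z (crossing_time z))"
  have "(1 - ?t) *\<^sub>R normal1 z + (?t - ?l) *\<^sub>R normal2 z = 0"
    using normal_path_crossing_time[of z] assms(2) by (simp add: normal_path_def algebra_simps)
  from normals_independent[OF assms(1,3) this] show ?thesis by simp
qed

lemma crossing_dir_cases:
  assumes z: "z \<in> crossings"
    and v: "v \<noteq> 0" "inner v (normal1 z) \<ge> 0" "inner v (normal2 z) \<ge> 0" "inner v (crossing_dir z) = 0"
  shows "crossing_dir z = normal1 z \<or> crossing_dir z = normal2 z"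
proof -
  let ?t = "crossing_time z"
  have t: "0 \<le> ?t" "?t \<le> 1" using crossing_time_bounds[OF z] by auto
  have "inner v (normal_path z ?t) = 0"
    using v(4) normal_path_crossing_time[of z] by (metis inner_scaleR_right mult_zero_right)
  then have "(1 - ?t) * inner v (normal1 z) + ?t * inner v (normal2 z) = 0"
    by (simp add: normal_path_def inner_add_right)
  moreover have "(1 - ?t) * inner v (normal1 z) \<ge> 0" "?t * inner v (normal2 z) \<ge> 0"
    using t v by simp_all
  ultimately have "(1 - ?t) * inner v (normal1 z) = 0" "?t * inner v (normal2 z) = 0" by linarith+
  then consider "?t = 0" | "?t = 1" | "inner v (normal1 z) = 0" "inner v (normal2 z) = 0"
    by (cases "?t = 0"; cases "?t = 1") auto
  then show ?thesis
  proof cases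
    case 1
    then show ?thesis using normal1_unit[OF z] by (simp add: crossing_dir_def normal_path_def sgn_div_norm)
  next
    case 2
    then show ?thesis using normal2_unit[OF z] by (simp add: crossing_dir_def normal_path_def sgn_div_norm)
  next
    case 3
    then have "normal2 z = normal1 z"
      using unit_orthogonal_cases[OF normal1_unit[OF z] normal2_unit[OF z] v(1)]
        normal2_neq_uminus_normal1[OF z] by auto
    then show ?thesis
      using normal1_unit[OF z] by (simp add: crossing_dir_def normal_path_def sgn_div_norm algebra_simps)
  qed
qed

lemma sides_of_shared_crossing_dir:
  assumes "z \<in> crossings" "z' \<in> crossings" "z \<noteq> z'" "inner (z - z') d = 0" "norm d = 1"
    and "inner q d = 2" "norm q > 2"
    and "n z \<in> {normal1 z, normal2 z}" "n z' \<in> {normal1 z', normal2 z'}"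
    and "norm (n z) = 1" "n z \<noteq> d" "n z \<noteq> - d" "norm (n z') = 1" "n z' \<noteq> d" "n z' \<noteq> - d"
  shows "inner (q - 2 *\<^sub>R d) (n z) > 0 \<or> inner (q - 2 *\<^sub>R d) (n z') > 0"
proof (rule unit_vectors_opposite_sides[OF assms(5,10-15) _ assms(4) _ arc_endpoint_tangent[OF assms(5-7)]])
  show "z - z' \<noteq> 0" using assms(3) by simp
  have "inner (z - z') (n z) \<ge> 0" "inner (z' - z) (n z') \<ge> 0"
    using normal_supports assms(1,2,8,9) by auto
  then show "inner (z - z') (n z) * inner (z - z') (n z') \<le> 0"
    by (simp add: inner_diff_left mult_nonneg_nonpos)
qed

lemma no_shared_first_endpoint:
  assumes z: "z \<in> crossings" and z': "z' \<in> crossings" and "z \<noteq> z'"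
    and d: "normal1 z = d" "normal1 z' = d" "normal2 z \<noteq> d" "normal2 z' \<noteq> d"
    and dir: "crossing_dir z = d" "crossing_dir z' = d" and "inner (z - z') d = 0"
  shows False
proof -
  have d1: "norm d = 1" "d \<in> normal_arc q1"
    using normal1_active[OF z] d(1) by (auto simp: active_normals_def normal_arc_def)
  have zero: "sign_fun d = 0" using sign_fun_crossing_dir[OF z] dir(1) by simp
  then have "d \<in> normal_arc q2" using d1(1) by (simp add: sign_fun_def normal_arc_def)
  then have "inner offset d > 0" using inner_offset_normal1(2)[OF z] d(1,3) by auto
  then have q1d: "inner q1 d = 2" using zero d1 by (auto simp: sign_fun_def normal_arc_def)
  \<comment> \<open>Turning from d towards an inward second normal enters the first arc where sign_fun > 0,
    although crossing_time w = 0 demands negative values arbitrarily close to d.\<close>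
  have inward: False
    if w: "w \<in> crossings" "normal1 w = d" "crossing_time w = 0" "inner (q1 - 2 *\<^sub>R d) (normal2 w) > 0" for w
  proof -
    have "\<forall>\<^sub>F s in at_right 0. inner offset ((1 - s) *\<^sub>R d + s *\<^sub>R normal2 w) > 0"
      using \<open>inner offset d > 0\<close> by (intro eventually_pos_along_segment) (auto intro: continuous_intros)
    moreover note eventually_inside_normal_arc[OF d1(1) normal2_unit[OF w(1)] q1d w(4)]
    ultimately have "\<forall>\<^sub>F s in at_right 0. \<not> sign_fun (normal_path w s) < 0"
      by eventually_elim (auto simp: sign_fun_def normal_path_def w(2))
    moreover have "\<exists>\<^sub>F s in at_right 0. sign_fun (normal_path w s) < 0"
      using first_crossing_crossing_time[OF w(1)] w(3) by (simp add: first_crossing_def)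
    ultimately show False by (simp add: frequently_def)
  qed
  have "crossing_time z = 0" "crossing_time z' = 0" using crossing_time_eq_0 z z' d dir by metis+
  moreover have "normal2 z \<noteq> - d" "normal2 z' \<noteq> - d"
    using normal2_neq_uminus_normal1[OF z] normal2_neq_uminus_normal1[OF z'] d by auto
  ultimately show False
    using sides_of_shared_crossing_dir[of z z' d q1 normal2] inward[of z] inward[of z'] assms
      d1(1) q1d norm_q1 normal2_unit by auto
qed

lemma no_shared_second_endpoint:
  assumes z: "z \<in> crossings" and z': "z' \<in> crossings" and "z \<noteq> z'"
    and d: "normal2 z = d" "normal2 z' = d" "normal1 z \<noteq> d" "normal1 z' \<noteq> d"
    and dir: "crossing_dir z = d" "crossing_dir z' = d" and "inner (z - z') d = 0"
  shows False
proof -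
  have d1: "norm d = 1" "d \<in> normal_arc q2"
    using normal2_active[OF z] d(1) by (auto simp: active_normals_def normal_arc_def)
  define g where "g y = - min (inner offset y) (inner q1 y - 2 * norm y)" for y
  have "g d > 0"
  proof (cases "d \<in> normal_arc q1")
    case True
    then show ?thesis using inner_offset_normal2(2)[OF z] d(1,3) by (auto simp: g_def)
  next
    case False
    then show ?thesis using d1(1) by (auto simp: g_def normal_arc_def)
  qed
  moreover have "isCont g d" unfolding g_def by (intro continuous_intros)
  moreover have "sign_fun d = 0" using sign_fun_crossing_dir[OF z] dir(1) by simp
  ultimately have q2d: "inner q2 d = 2"
    using d1 by (auto simp: sign_fun_def g_def normal_arc_def max_def split: if_splits)
  \<comment> \<open>Symmetric to the first case, with the roles of the two arcs and of the ends of the path exchanged.\<close>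
  have inward: False
    if w: "w \<in> crossings" "normal2 w = d" "crossing_time w = 1" "inner (q2 - 2 *\<^sub>R d) (normal1 w) > 0" for w
  proof -
    have "\<forall>\<^sub>F s in at_right 0. g ((1 - s) *\<^sub>R d + s *\<^sub>R normal1 w) > 0"
      using \<open>g d > 0\<close> \<open>isCont g d\<close> by (rule eventually_pos_along_segment[rotated])
    moreover note eventually_inside_normal_arc[OF d1(1) normal1_unit[OF w(1)] q2d w(4)]
    moreover note eventually_at_right_real[OF zero_less_one]
    ultimately have "\<forall>\<^sub>F s in at_right 0. sign_fun (normal_path w (1 - s)) < 0 \<and> 1 - s \<in> {0..<1}"
      by eventually_elim (auto simp: sign_fun_def g_def normal_path_def w(2) algebra_simps)
    then obtain s where s: "sign_fun (normal_path w (1 - s)) < 0" "1 - s \<in> {0..<1}"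
      using eventually_happens trivial_limit_at_right_real by blast
    have "\<forall>t\<in>{0..<1}. sign_fun (normal_path w t) \<ge> 0"
      using first_crossing_crossing_time[OF w(1)] w(3) by (simp add: first_crossing_def)
    then show False using s by fastforce
  qed
  have "crossing_time z = 1" "crossing_time z' = 1" using crossing_time_eq_1 z z' d dir by metis+
  moreover have "normal1 z \<noteq> - d" "normal1 z' \<noteq> - d"
    using normal2_neq_uminus_normal1[OF z] normal2_neq_uminus_normal1[OF z'] d by auto
  ultimately show False
    using sides_of_shared_crossing_dir[of z z' d q2 normal1] inward[of z] inward[of z'] assms
      d1(1) q2d norm_q2 normal1_unit by auto
qed

lemma inj_on_crossing_dir: "inj_on crossing_dir crossings"
proof (rule inj_onI, rule ccontr)
  fix z z' assume z: "z \<in> crossings" and z': "z' \<in> crossings" and eq: "crossing_dir z = crossing_dir z'"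
    and "z \<noteq> z'"
  define d where "d = crossing_dir z"
  have sz: "inner (z - z') (normal1 z) \<ge> 0" "inner (z - z') (normal2 z) \<ge> 0"
    and sz': "inner (z' - z) (normal1 z') \<ge> 0" "inner (z' - z) (normal2 z') \<ge> 0"
    using normal_supports z z' by auto
  have "inner (z - z') d \<ge> 0" "inner (z' - z) d \<ge> 0"
    using inner_crossing_dir_nonneg[OF z sz] inner_crossing_dir_nonneg[OF z' sz'] eq by (auto simp: d_def)
  then have orth: "inner (z - z') d = 0" "inner (z' - z) d = 0" by (auto simp: inner_diff_left)
  have "d = normal1 z \<or> d = normal2 z" "d = normal1 z' \<or> d = normal2 z'"
    using crossing_dir_cases[OF z _ sz] crossing_dir_cases[OF z' _ sz'] orth \<open>z \<noteq> z'\<close> eq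
    by (auto simp: d_def)
  moreover have "\<not> (d = normal1 z \<and> d = normal2 z')" "\<not> (d = normal2 z \<and> d = normal1 z')"
    using shared_normal_contradiction[OF z z' \<open>z \<noteq> z'\<close> _ _ orth(1)]
      shared_normal_contradiction[OF z' z \<open>z \<noteq> z'\<close>[symmetric] _ _ orth(2)]
      normal1_active[OF z] normal2_active[OF z'] normal1_active[OF z'] normal2_active[OF z] by auto
  ultimately show False
    using no_shared_first_endpoint[OF z z' \<open>z \<noteq> z'\<close>] no_shared_second_endpoint[OF z z' \<open>z \<noteq> z'\<close>]
      orth eq by (auto simp: d_def)
qed

definition zero_offset_normals :: "(real^2) set" where
  "zero_offset_normals = {d \<in> normal_arc q1 \<inter> normal_arc q2. inner offset d = 0}"

definition forward_endpoints :: "(real^2) set" where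
  "forward_endpoints = {d \<in> arc_endpoints q1 \<inter> normal_arc q2. inner offset d \<ge> 0}"

lemma sign_fun_zeros_subset:
  "{d. norm d = 1 \<and> sign_fun d = 0} \<subseteq> arc_endpoints q2 \<union> (zero_offset_normals \<union> forward_endpoints)"
proof
  fix d assume "d \<in> {d. norm d = 1 \<and> sign_fun d = 0}"
  then have "norm d = 1" and "sign_fun d = 0" by simp_all
  then have max0: "max (min (inner offset d) (inner q1 d - 2)) (2 - inner q2 d) = 0"
    by (simp add: sign_fun_def)
  show "d \<in> arc_endpoints q2 \<union> (zero_offset_normals \<union> forward_endpoints)"
  proof (cases "inner q2 d = 2")
    case False
    then have "min (inner offset d) (inner q1 d - 2) = 0" "inner q2 d \<ge> 2"
      using max0 by (auto simp: max_def split: if_splits)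
    then have "(inner offset d = 0 \<and> inner q1 d \<ge> 2) \<or> (inner q1 d = 2 \<and> inner offset d \<ge> 0)"
      by (auto simp: min_def split: if_splits)
    then show ?thesis using \<open>norm d = 1\<close> \<open>inner q2 d \<ge> 2\<close>
      by (auto simp: zero_offset_normals_def forward_endpoints_def arc_endpoints_def normal_arc_def)
  qed (use \<open>norm d = 1\<close> in \<open>simp add: arc_endpoints_def\<close>)
qed

lemma finite_card_zero_offset_normals: "finite zero_offset_normals \<and> card zero_offset_normals \<le> 1"
proof (rule subsingleton_finite_card_le_1)
  fix a b assume a: "a \<in> zero_offset_normals" and b: "b \<in> zero_offset_normals"
  show "a = b"
  proof (cases "offset = 0")
    case True
    \<comment> \<open>Equal centres: every common normal d yields the common boundary point c1 + 2 d.\<close>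
    then have "c2 = c1" by (simp add: offset_def)
    then have "c1 + 2 *\<^sub>R d \<in> crossings" if "d \<in> normal_arc q1 \<inter> normal_arc q2" for d
      unfolding crossings_def using circle_point_in_tangent_boundary(1) that by auto
    then have "(\<lambda>d. c1 + 2 *\<^sub>R d) ` (normal_arc q1 \<inter> normal_arc q2) \<subseteq> crossings" by blast
    moreover have "inj_on (\<lambda>d. c1 + 2 *\<^sub>R d) (normal_arc q1 \<inter> normal_arc q2)" by (rule inj_onI) simp
    ultimately have "finite (normal_arc q1 \<inter> normal_arc q2)"
      using finite_crossings finite_subset finite_imageD unfolding crossings_def by blast
    then show "a = b" using infinite_normal_arc_Int a b by (auto simp: zero_offset_normals_def)
  next
    case False
    then have "b = a \<or> b = - a"
      using unit_orthogonal_cases[of a b offset] a b by (auto simp: zero_offset_normals_def normal_arc_def)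
    then show "a = b" using normal_arc_not_antipodal a b by (auto simp: zero_offset_normals_def)
  qed
qed

lemma forward_endpoints_subsingleton:
  assumes \<zeta>: "\<zeta> \<in> zero_offset_normals" "\<zeta> \<notin> forward_endpoints"
    and ab: "a \<in> forward_endpoints" "b \<in> forward_endpoints"
  shows "a = b"
proof (rule ccontr)
  \<comment> \<open>Two endpoints of the first arc with nonnegative offset would put \<zeta> in their cone.\<close>
  assume "a \<noteq> b"
  moreover have "\<zeta> \<in> normal_arc q1" using \<zeta> by (simp add: zero_offset_normals_def)
  moreover have "a \<in> arc_endpoints q1" "b \<in> arc_endpoints q1" using ab by (simp_all add: forward_endpoints_def)
  ultimately obtain \<alpha> \<beta> where "\<alpha> \<ge> 0" "\<beta> \<ge> 0" and \<zeta>_eq: "\<zeta> = \<alpha> *\<^sub>R a + \<beta> *\<^sub>R b"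
    using normal_arc_cone[OF norm_q1] by metis
  moreover have "inner offset a \<ge> 0" "inner offset b \<ge> 0" "inner offset \<zeta> = 0"
    using ab \<zeta> by (auto simp: zero_offset_normals_def forward_endpoints_def)
  ultimately have "\<alpha> * inner offset a = 0"
    by (simp add: inner_add_right add_nonneg_eq_0_iff)
  then consider "\<alpha> = 0" | "inner offset a = 0" by auto
  then show False
  proof cases
    case 1
    then have "\<zeta> = \<beta> *\<^sub>R b" using \<zeta>_eq by simp
    moreover have "norm \<zeta> = 1" "norm b = 1"
      using \<zeta> ab by (auto simp: zero_offset_normals_def forward_endpoints_def normal_arc_def)
    ultimately have "\<zeta> = b" using \<open>\<beta> \<ge> 0\<close> by simp
    then show False using \<zeta> ab by simp
  next
    case 2
    then have "a \<in> zero_offset_normals"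
      using ab by (auto simp: zero_offset_normals_def forward_endpoints_def arc_endpoints_def normal_arc_def)
    then have "a = \<zeta>" using \<zeta>(1) finite_card_zero_offset_normals by (auto simp: card_le_Suc0_iff_eq)
    then show False using \<zeta> ab by simp
  qed
qed

lemma card_zero_offset_normals_Un_forward_endpoints:
  "finite (zero_offset_normals \<union> forward_endpoints) \<and> card (zero_offset_normals \<union> forward_endpoints) \<le> 2"
proof -
  let ?A = zero_offset_normals and ?B = forward_endpoints
  have A: "finite ?A" "card ?A \<le> 1" using finite_card_zero_offset_normals by simp_all
  have "?B \<subseteq> arc_endpoints q1" by (auto simp: forward_endpoints_def)
  then have B: "finite ?B" "card ?B \<le> 2"
    using finite_card_arc_endpoints[OF norm_q1] card_mono[of "arc_endpoints q1" ?B] finite_subset by auto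
  show ?thesis
  proof (cases "?B \<subseteq> ?A \<or> ?A \<subseteq> ?B")
    case True
    then have "?A \<union> ?B = ?A \<or> ?A \<union> ?B = ?B" by blast
    then show ?thesis
    proof
      assume "?A \<union> ?B = ?A"
      then show ?thesis using A by simp
    next
      assume "?A \<union> ?B = ?B"
      then show ?thesis using B by simp
    qed
  next
    case False
    then obtain \<zeta> where "\<zeta> \<in> ?A" "\<zeta> \<notin> ?B" by blast
    then have "card ?B \<le> 1" using B(1) forward_endpoints_subsingleton by (auto simp: card_le_Suc0_iff_eq)
    then have "card (?A \<union> ?B) \<le> 2" using A(2) card_Un_le[of ?A ?B] by linarith
    then show ?thesis using A(1) B(1) by simp
  qed
qed

lemma finite_card_sign_fun_zeros:
  "finite {d. norm d = 1 \<and> sign_fun d = 0} \<and> card {d. norm d = 1 \<and> sign_fun d = 0} \<le> 4"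
proof -
  let ?U = "arc_endpoints q2 \<union> (zero_offset_normals \<union> forward_endpoints)"
  have "finite ?U"
    using finite_card_arc_endpoints(1)[OF norm_q2] card_zero_offset_normals_Un_forward_endpoints by simp
  moreover have "card ?U \<le> 4"
    using finite_card_arc_endpoints(2)[OF norm_q2] card_zero_offset_normals_Un_forward_endpoints
      card_Un_le[of "arc_endpoints q2" "zero_offset_normals \<union> forward_endpoints"] by linarith
  ultimately show ?thesis using sign_fun_zeros_subset by (meson card_mono finite_subset order_trans)
qed

lemma card_crossings: "card crossings \<le> 4"
proof -
  have "crossing_dir ` crossings \<subseteq> {d. norm d = 1 \<and> sign_fun d = 0}"
    using crossing_dir_unit sign_fun_crossing_dir by auto
  then have "card (crossing_dir ` crossings) \<le> 4"
    using finite_card_sign_fun_zeros card_mono order_trans by blast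
  then show ?thesis using card_image[OF inj_on_crossing_dir] by simp
qed

end

theorem card_tangent_boundary_Int_le_4:
  fixes q1 q2 c1 c2 :: "real^2"
  assumes "norm q1 \<ge> 2" "norm q2 \<ge> 2" and fin: "finite (tangent_boundary q1 c1 \<inter> tangent_boundary q2 c2)"
  shows "card (tangent_boundary q1 c1 \<inter> tangent_boundary q2 c2) \<le> 4"
proof -
  consider "norm q1 = 2" | "norm q2 = 2" | "norm q1 > 2" "norm q2 > 2" using assms by linarith
  then show ?thesis
  proof cases
    case 1
    then show ?thesis using card_tangent_boundary_Int_degenerate[OF 1 fin] by simp
  next
    case 2
    then show ?thesis using card_tangent_boundary_Int_degenerate[OF 2, of c2 q1 c1] fin
      by (simp add: Int_commute)
  next
    case 3
    show ?thesis
    proof (cases "\<exists>z n. z \<in> tangent_boundary q1 c1 \<inter> tangent_boundary q2 c2 \<and>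
        n \<in> active_normals q1 c1 z \<and> - n \<in> active_normals q2 c2 z")
      case True
      then show ?thesis using card_tangent_boundary_Int_opposite_normals[OF fin] by fastforce
    next
      case False
      then interpret boundary_pair q1 q2 c1 c2 using 3 fin by unfold_locales blast+
      show ?thesis using card_crossings by (simp add: crossings_def)
    qed
  qed
qed

theorem mainTheorem2:
  fixes S T :: "pt set" and M :: "pt \<Rightarrow> pt" and i j :: nat
    and A B C D :: "pt \<times> pt"
  assumes "valid_config S" and "valid_config T" and "bij_betw M S T"
    and "i \<in> {1, 2}" and "j \<in> {1, 2}"
    and "A \<in> pairs_of M S" and "B \<in> pairs_of M S" and "A \<noteq> B"
    and "C \<in> pairs_of M S" and "D \<in> pairs_of M S" and "C \<noteq> D"
    and "(i, A, B) \<noteq> (j, C, D)"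
    and "finite (frontier (vippodrome i A B) \<inter> frontier (vippodrome j C D))"
  shows "card (frontier (vippodrome i A B) \<inter> frontier (vippodrome j C D)) \<le> 4"
proof -
  obtain q1 c1 where 1: "norm q1 \<ge> 2" "vippodrome i A B = tangent_region q1 c1"
    using vippodrome_eq_tangent_region[OF assms(1-4,6-8)] by blast
  obtain q2 c2 where 2: "norm q2 \<ge> 2" "vippodrome j C D = tangent_region q2 c2"
    using vippodrome_eq_tangent_region[OF assms(1-3,5,9-11)] by blast
  show ?thesis
    using card_tangent_boundary_Int_le_4[OF 1(1) 2(1)] assms(13)
    by (simp add: 1(2) 2(2) frontier_tangent_region[OF 1(1)] frontier_tangent_region[OF 2(1)])
qed

end
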